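(* Let $n \ge 1$, let $\mathcal{H}$ be a finite-dimensional Hilbert space and let $S$ be any system of the classical-quantum theory. Every leak $l : \mathcal{D}_n \otimes \mathcal{B}(\mathcal{H}) \to \mathcal{D}_n \otimes \mathcal{B}(\mathcal{H}) \otimes S$ for the composite classical-quantum system $\mathcal{D}_n \otimes \mathcal{B}(\mathcal{H})$ is of the form $$ l(|i\rangle\langle i| \otimes \rho) = |i\rangle\langle i| \otimes \rho \otimes \Lambda(|i\rangle\langle i|) \qquad (i = 1,\dots,n,\ \rho \in \mathcal{B}(\mathcal{H})),$$ for some causal (trace-preserving completely positive) process $\Lambda : \mathcal{D}_n \to S$; that is, $l$ copies the classical input, applies $\Lambda$ to one copy to produce the leaked output, and acts as the identity on the quantum input.
   Context: The classical-quantum process theory: systems are finite-dimensional algebras of the form $\mathcal{D}_n \otimes \mathcal{B}(\mathcal{H})$, where $\mathcal{D}_n$ is the algebra of diagonal $n\times n$ complex matrices (an $n$-state classical system, spanned by $|i\rangle\langle i|$) and $\mathcal{H}$ a finite-dimensional Hilbert space (a quantum system); composite systems are tensor products (with $\mathcal{D}_n\otimes\mathcal{D}_m \cong \mathcal{D}_{nm}$). Processes are completely positive maps between these algebras; discarding is the trace (partial trace on a factor), and a process is causal iff it is trace preserving. A leak for a system $A$ is a process $l : A \to A \otimes S$ such that tracing out the $S$ output gives the identity on $A$. *)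

theory Defs
  imports Complex_Main "Jordan_Normal_Form.Matrix" "Jordan_Normal_Form.Conjugate"
begin

(* The system D_m (x) B(C^k) is realised as the algebra of (m*k) x (m*k) complex
   matrices that are block diagonal with respect to the classical index
   (row/column index p encodes (j,b) as p = j*k + b, j<m classical, b<k quantum). *)

definition kron :: "complex mat \<Rightarrow> complex mat \<Rightarrow> complex mat" where
  "kron A B = mat (dim_row A * dim_row B) (dim_col A * dim_col B)
     (\<lambda>(i,j). A $$ (i div dim_row B, j div dim_col B) * B $$ (i mod dim_row B, j mod dim_col B))"

definition mtrace :: "complex mat \<Rightarrow> complex" where
  "mtrace X = (\<Sum>i<dim_row X. X $$ (i,i))"

definition ketbra :: "nat \<Rightarrow> nat \<Rightarrow> complex mat" where
  "ketbra n i = mat n n (\<lambda>(p,q). if p = i \<and> q = i then 1 else 0)"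

definition cq_alg :: "nat \<Rightarrow> nat \<Rightarrow> complex mat set" where
  "cq_alg m k = {X \<in> carrier_mat (m*k) (m*k).
      \<forall>p q. p < m*k \<longrightarrow> q < m*k \<longrightarrow> p div k \<noteq> q div k \<longrightarrow> X $$ (p,q) = 0}"

(* the composite algebra (D_n (x) B(C^d)) (x) (D_m (x) B(C^k)), Kronecker ordering:
   index ((i*d+a)*m + j)*k + b *)
definition cq_comp_alg :: "nat \<Rightarrow> nat \<Rightarrow> nat \<Rightarrow> nat \<Rightarrow> complex mat set" where
  "cq_comp_alg n d m k = {X \<in> carrier_mat (n*d*(m*k)) (n*d*(m*k)).
      \<forall>p q. p < n*d*(m*k) \<longrightarrow> q < n*d*(m*k) \<longrightarrow>
        (p div (d*(m*k)) \<noteq> q div (d*(m*k)) \<or> (p div k) mod m \<noteq> (q div k) mod m)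
        \<longrightarrow> X $$ (p,q) = 0}"

definition psd :: "complex mat \<Rightarrow> bool" where
  "psd X \<longleftrightarrow> square_mat X \<and>
     (\<forall>v \<in> carrier_vec (dim_row X).
        Im (conjugate v \<bullet> (X *\<^sub>v v)) = 0 \<and> 0 \<le> Re (conjugate v \<bullet> (X *\<^sub>v v)))"

definition blk :: "complex mat \<Rightarrow> nat \<Rightarrow> nat \<Rightarrow> nat \<Rightarrow> complex mat" where
  "blk Y N a b = mat N N (\<lambda>(i,j). Y $$ (a*N+i, b*N+j))"

definition amp_alg :: "nat \<Rightarrow> nat \<Rightarrow> complex mat set \<Rightarrow> complex mat set" where
  "amp_alg r N A = {Y \<in> carrier_mat (r*N) (r*N). \<forall>a<r. \<forall>b<r. blk Y N a b \<in> A}"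

definition amplify :: "nat \<Rightarrow> nat \<Rightarrow> nat \<Rightarrow> (complex mat \<Rightarrow> complex mat) \<Rightarrow> complex mat \<Rightarrow> complex mat" where
  "amplify r N M \<Phi> Y = mat (r*M) (r*M) (\<lambda>(p,q). \<Phi> (blk Y N (p div M) (q div M)) $$ (p mod M, q mod M))"

definition lin_on :: "complex mat set \<Rightarrow> (complex mat \<Rightarrow> complex mat) \<Rightarrow> bool" where
  "lin_on A \<Phi> \<longleftrightarrow> (\<forall>x\<in>A. \<forall>y\<in>A. \<Phi> (x + y) = \<Phi> x + \<Phi> y) \<and>
                    (\<forall>c. \<forall>x\<in>A. \<Phi> (c \<cdot>\<^sub>m x) = c \<cdot>\<^sub>m \<Phi> x)"

definition completely_positive ::
  "complex mat set \<Rightarrow> nat \<Rightarrow> nat \<Rightarrow> (complex mat \<Rightarrow> complex mat) \<Rightarrow> bool" where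
  "completely_positive A N M \<Phi> \<longleftrightarrow>
     (\<forall>r Y. Y \<in> amp_alg r N A \<and> psd Y \<longrightarrow> psd (amplify r N M \<Phi> Y))"

definition process ::
  "complex mat set \<Rightarrow> nat \<Rightarrow> complex mat set \<Rightarrow> nat \<Rightarrow> (complex mat \<Rightarrow> complex mat) \<Rightarrow> bool" where
  "process A N B M \<Phi> \<longleftrightarrow> lin_on A \<Phi> \<and> (\<forall>x\<in>A. \<Phi> x \<in> B) \<and> completely_positive A N M \<Phi>"

definition causal :: "complex mat set \<Rightarrow> (complex mat \<Rightarrow> complex mat) \<Rightarrow> bool" where
  "causal A \<Phi> \<longleftrightarrow> (\<forall>x\<in>A. mtrace (\<Phi> x) = mtrace x)"

definition ptrace_S :: "nat \<Rightarrow> nat \<Rightarrow> nat \<Rightarrow> nat \<Rightarrow> complex mat \<Rightarrow> complex mat" where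
  "ptrace_S n d m k X = mat (n*d) (n*d) (\<lambda>(p,q). \<Sum>t<m*k. X $$ (p*(m*k)+t, q*(m*k)+t))"

definition is_leak :: "nat \<Rightarrow> nat \<Rightarrow> nat \<Rightarrow> nat \<Rightarrow> (complex mat \<Rightarrow> complex mat) \<Rightarrow> bool" where
  "is_leak n d m k l \<longleftrightarrow>
     process (cq_alg n d) (n*d) (cq_comp_alg n d m k) (n*d*(m*k)) l \<and>
     (\<forall>x\<in>cq_alg n d. ptrace_S n d m k (l x) = x)"

end

theory Submission
  imports Defs
begin

text \<open>Let \<open>E\<^sub>p\<^sub>q\<close> be a matrix unit of \<open>A = D\<^sub>n \<otimes> B(H)\<close> with \<open>p\<close>, \<open>q\<close> in the same classical block. The
  partial-trace condition fixes the trace of each diagonal block of \<open>l (E\<^sub>p\<^sub>p)\<close>, so by positivity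
  \<open>l (E\<^sub>p\<^sub>p)\<close> lives in block \<open>p\<close>. Applying \<open>id\<^sub>2 \<otimes> l\<close> to the rank-one projection onto \<open>e\<^sub>p \<oplus> e\<^sub>q\<close>
  gives a positive matrix whose quadratic form vanishes on the vectors \<open>e\<^sub>p\<^sub>,\<^sub>t \<oplus> -e\<^sub>q\<^sub>,\<^sub>t\<close>; these null
  vectors force \<open>l (E\<^sub>p\<^sub>q) = E\<^sub>p\<^sub>q \<otimes> \<sigma>\<^sub>i\<close> with \<open>\<sigma>\<^sub>i\<close> depending only on the classical index \<open>i\<close>.
  Then \<open>\<Lambda> X = \<Sum>\<^sub>i X\<^sub>i\<^sub>i \<sigma>\<^sub>i\<close> is causal because each \<open>\<sigma>\<^sub>i\<close> has trace one, and completely positive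
  because \<open>(id \<otimes> \<Lambda>) Y\<close> is a sum of compressions of \<open>(id \<otimes> l) (Y\<^sub>j \<otimes> E\<^sub>j\<^sub>d\<^sub>,\<^sub>j\<^sub>d)\<close>, \<open>Y\<^sub>j\<close> the \<open>j\<close>-th minor of \<open>Y\<close>.\<close>

text \<open>Matrices are handled as kernels on \<open>{..<N}\<close>, so that compressions and re-indexings of
  positive matrices become statements about functions.\<close>

definition sesq :: "nat \<Rightarrow> (nat \<Rightarrow> nat \<Rightarrow> complex) \<Rightarrow> (nat \<Rightarrow> complex) \<Rightarrow> (nat \<Rightarrow> complex) \<Rightarrow> complex" where
  "sesq N Z f g = (\<Sum>x<N. \<Sum>y<N. cnj (f x) * Z x y * g y)"

definition psd_kernel :: "nat \<Rightarrow> (nat \<Rightarrow> nat \<Rightarrow> complex) \<Rightarrow> bool" where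
  "psd_kernel N Z \<longleftrightarrow> (\<forall>f. 0 \<le> sesq N Z f f)"

definition delta :: "nat \<Rightarrow> nat \<Rightarrow> complex" where
  "delta a x = (if x = a then 1 else 0)"

lemma cscalar_prod_mult_mat_vec_eq_sesq:
  assumes "Z \<in> carrier_mat N N" "v \<in> carrier_vec N"
  shows "conjugate v \<bullet> (Z *\<^sub>v v) = sesq N (\<lambda>x y. Z $$ (x,y)) (\<lambda>i. v $ i) (\<lambda>i. v $ i)"
  using assms unfolding sesq_def scalar_prod_def mult_mat_vec_def
  by (auto simp: sum_distrib_left atLeast0LessThan mult.assoc intro!: sum.cong)

lemma psd_iff_psd_kernel:
  assumes Z: "Z \<in> carrier_mat N N"
  shows "psd Z \<longleftrightarrow> psd_kernel N (\<lambda>x y. Z $$ (x,y))"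
proof -
  have "psd Z \<longleftrightarrow> (\<forall>v \<in> carrier_vec N. 0 \<le> conjugate v \<bullet> (Z *\<^sub>v v))"
    using Z unfolding psd_def less_eq_complex_def by auto
  also have "\<dots> \<longleftrightarrow> psd_kernel N (\<lambda>x y. Z $$ (x,y))"
  proof
    assume h: "\<forall>v \<in> carrier_vec N. 0 \<le> conjugate v \<bullet> (Z *\<^sub>v v)"
    show "psd_kernel N (\<lambda>x y. Z $$ (x,y))" unfolding psd_kernel_def
    proof
      fix f
      have "sesq N (\<lambda>x y. Z $$ (x,y)) f f = conjugate (vec N f) \<bullet> (Z *\<^sub>v vec N f)"
        by (subst cscalar_prod_mult_mat_vec_eq_sesq[OF Z]) (auto simp: sesq_def intro!: sum.cong)
      then show "0 \<le> sesq N (\<lambda>x y. Z $$ (x,y)) f f" using h by simp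
    qed
  qed (simp add: cscalar_prod_mult_mat_vec_eq_sesq[OF Z] psd_kernel_def)
  finally show ?thesis .
qed

lemma psd_kernel_cong:
  "(\<And>x y. x < N \<Longrightarrow> y < N \<Longrightarrow> Z x y = Z' x y) \<Longrightarrow> psd_kernel N Z \<longleftrightarrow> psd_kernel N Z'"
  unfolding psd_kernel_def sesq_def by (metis (no_types, lifting) lessThan_iff sum.cong)

lemma cnj_delta [simp]: "cnj (delta a x) = delta a x"
  unfolding delta_def by simp

lemma sum_mult_delta [simp]: "a < N \<Longrightarrow> (\<Sum>x<N. F x * delta a x) = F a"
  unfolding delta_def by (simp add: if_distrib[of "(*) _"] sum.delta cong: if_cong)

lemma sum_delta_mult [simp]: "a < N \<Longrightarrow> (\<Sum>x<N. delta a x * F x) = F a"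
  using sum_mult_delta[of a N F] by (simp add: mult.commute)

lemma sesq_delta_left: "a < N \<Longrightarrow> sesq N Z (delta a) g = (\<Sum>y<N. Z a y * g y)"
  unfolding sesq_def by (simp add: sum.swap[of _ "{..<N}"] mult.assoc sum_distrib_right[symmetric])

lemma sesq_delta_right: "a < N \<Longrightarrow> sesq N Z f (delta a) = (\<Sum>x<N. cnj (f x) * Z x a)"
  unfolding sesq_def by simp

lemma sesq_diff_left: "sesq N Z (\<lambda>x. f x - f' x) g = sesq N Z f g - sesq N Z f' g"
  unfolding sesq_def by (simp add: algebra_simps sum_subtractf)

lemma sesq_diff_right: "sesq N Z f (\<lambda>x. g x - g' x) = sesq N Z f g - sesq N Z f g'"
  unfolding sesq_def by (simp add: algebra_simps sum_subtractf)

lemma sesq_scaled_add: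
  "sesq N Z (\<lambda>x. c * f x + g x) (\<lambda>x. c * f x + g x)
     = cnj c * c * sesq N Z f f + cnj c * sesq N Z f g + c * sesq N Z g f + sesq N Z g g"
  unfolding sesq_def by (simp add: algebra_simps sum.distrib sum_distrib_left)

lemma psd_kernel_null_vector:
  assumes psd: "psd_kernel N Z" and null: "sesq N Z f f = 0"
  shows "sesq N Z f g = 0" "sesq N Z g f = 0"
proof -
  define \<alpha> \<beta> \<gamma> where "\<alpha> = sesq N Z f g" and "\<beta> = sesq N Z g f" and "\<gamma> = sesq N Z g g"
  have nonneg: "0 \<le> cnj c * \<alpha> + c * \<beta> + \<gamma>" for c
  proof -
    have "0 \<le> sesq N Z (\<lambda>x. c * f x + g x) (\<lambda>x. c * f x + g x)"
      using psd unfolding psd_kernel_def by blast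
    then show ?thesis unfolding sesq_scaled_add null \<alpha>_def \<beta>_def \<gamma>_def by (simp add: add.assoc)
  qed
  have re: "0 \<le> Re (cnj c * \<alpha> + c * \<beta> + \<gamma>)" and im: "Im (cnj c * \<alpha> + c * \<beta> + \<gamma>) = 0" for c
    using nonneg[of c] unfolding less_eq_complex_def by simp_all
  have slope: "a = 0" if "\<And>t. 0 \<le> a * t + b" for a b :: real
  proof (rule ccontr)
    assume "a \<noteq> 0"
    have "0 \<le> a * (-(b+1)/a) + b" by (rule that)
    with \<open>a \<noteq> 0\<close> show False by (simp add: field_simps)
  qed
  have "0 \<le> (Re \<alpha> + Re \<beta>) * t + Re \<gamma>" for t
    using re[of "complex_of_real t"] by (simp add: algebra_simps)
  then have "Re \<alpha> + Re \<beta> = 0" by (rule slope)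
  moreover have "0 \<le> (Im \<alpha> - Im \<beta>) * t + Re \<gamma>" for t
    using re[of "\<i> * complex_of_real t"] by (simp add: algebra_simps)
  then have "Im \<alpha> - Im \<beta> = 0" by (rule slope)
  moreover have "Im \<alpha> + Im \<beta> = 0" "Re \<beta> - Re \<alpha> = 0" using im[of 0] im[of 1] im[of \<i>] by simp_all
  ultimately have "\<alpha> = 0" "\<beta> = 0" by (auto simp: complex_eq_iff)
  then show "sesq N Z f g = 0" "sesq N Z g f = 0" unfolding \<alpha>_def \<beta>_def by simp_all
qed

lemma psd_kernel_diag_nonneg: "psd_kernel N Z \<Longrightarrow> a < N \<Longrightarrow> 0 \<le> Z a a"
  unfolding psd_kernel_def by (metis sesq_delta_left sum_mult_delta)

lemma psd_kernel_zero_diag: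
  assumes "psd_kernel N Z" "a < N" "y < N" "Z a a = 0"
  shows "Z a y = 0" "Z y a = 0"
  using psd_kernel_null_vector[OF assms(1), of "delta a" "delta y"] assms
  by (simp_all add: sesq_delta_left sesq_delta_right)

lemma sesq_delta_diff:
  "a < N \<Longrightarrow> b < N \<Longrightarrow> sesq N Z (\<lambda>x. delta a x - delta b x) (\<lambda>x. delta a x - delta b x)
     = Z a a - Z a b - Z b a + Z b b"
  by (simp add: sesq_diff_left sesq_diff_right sesq_delta_left sesq_delta_right)

lemma psd_kernel_eq_if_null_difference:
  assumes "psd_kernel N Z" "a < N" "b < N" "y < N" "Z a a - Z a b - Z b a + Z b b = 0"
  shows "Z a y = Z b y" "Z y a = Z y b"
proof -
  let ?e = "\<lambda>x. delta a x - delta b x"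
  have "sesq N Z ?e ?e = Z a a - Z a b - Z b a + Z b b"
    using assms(2,3) by (rule sesq_delta_diff)
  with psd_kernel_null_vector[OF assms(1), of ?e "delta y"] assms
  show "Z a y = Z b y" "Z y a = Z y b"
    by (simp_all add: sesq_diff_left sesq_diff_right sesq_delta_left sesq_delta_right)
qed


lemma sum_sum_reindex_inj_on:
  fixes h :: "nat \<Rightarrow> nat"
  assumes inj: "inj_on h {..<n}" and img: "h ` {..<n} \<subseteq> {..<N}"
    and outside: "\<And>x y. x < N \<Longrightarrow> y < N \<Longrightarrow> x \<notin> h ` {..<n} \<or> y \<notin> h ` {..<n} \<Longrightarrow> T x y = 0"
  shows "(\<Sum>x<N. \<Sum>y<N. T x y) = (\<Sum>x<n. \<Sum>y<n. T (h x) (h y))"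
proof -
  let ?H = "h ` {..<n}"
  have "(\<Sum>x<N. \<Sum>y<N. T x y) = (\<Sum>x\<in>?H. \<Sum>y<N. T x y)"
    using img outside by (intro sum.mono_neutral_right) auto
  also have "\<dots> = (\<Sum>x\<in>?H. \<Sum>y\<in>?H. T x y)"
  proof (rule sum.cong[OF refl])
    fix x assume "x \<in> ?H"
    then show "(\<Sum>y<N. T x y) = (\<Sum>y\<in>?H. T x y)"
      using img outside by (intro sum.mono_neutral_right) auto
  qed
  also have "\<dots> = (\<Sum>x<n. \<Sum>y<n. T (h x) (h y))"
    by (simp add: sum.reindex[OF inj])
  finally show ?thesis .
qed

lemma psd_kernel_compress:
  assumes "psd_kernel N Z" and inj: "inj_on h {..<n}" and img: "h ` {..<n} \<subseteq> {..<N}"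
    and entries: "\<And>x y. x < n \<Longrightarrow> y < n \<Longrightarrow> Z' x y = Z (h x) (h y)"
  shows "psd_kernel n Z'"
  unfolding psd_kernel_def
proof
  fix f :: "nat \<Rightarrow> complex"
  define g where "g y = (if y \<in> h ` {..<n} then f (the_inv_into {..<n} h y) else 0)" for y
  have gh: "g (h x) = f x" if "x < n" for x
    using that inj by (auto simp: g_def the_inv_into_f_f)
  have "sesq N Z g g = (\<Sum>x<n. \<Sum>y<n. cnj (g (h x)) * Z (h x) (h y) * g (h y))"
    unfolding sesq_def by (rule sum_sum_reindex_inj_on[OF inj img]) (auto simp: g_def)
  also have "\<dots> = sesq n Z' f f" unfolding sesq_def by (intro sum.cong) (auto simp: gh entries)
  finally show "0 \<le> sesq n Z' f f" using assms(1) unfolding psd_kernel_def by metis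
qed

lemma psd_kernel_extend:
  assumes "psd_kernel n Z'" and inj: "inj_on h {..<n}" and img: "h ` {..<n} \<subseteq> {..<N}"
    and entries: "\<And>x y. x < n \<Longrightarrow> y < n \<Longrightarrow> Z' x y = Z (h x) (h y)"
    and outside: "\<And>x y. x < N \<Longrightarrow> y < N \<Longrightarrow> x \<notin> h ` {..<n} \<or> y \<notin> h ` {..<n} \<Longrightarrow> Z x y = 0"
  shows "psd_kernel N Z"
  unfolding psd_kernel_def
proof
  fix g :: "nat \<Rightarrow> complex"
  have "sesq N Z g g = (\<Sum>x<n. \<Sum>y<n. cnj (g (h x)) * Z (h x) (h y) * g (h y))"
    unfolding sesq_def by (rule sum_sum_reindex_inj_on[OF inj img]) (use outside in auto)
  also have "\<dots> = sesq n Z' (g \<circ> h) (g \<circ> h)" unfolding sesq_def by (intro sum.cong) (auto simp: entries)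
  finally show "0 \<le> sesq N Z g g" using assms(1) unfolding psd_kernel_def by metis
qed

lemma psd_kernel_sum:
  assumes "\<And>j. j \<in> J \<Longrightarrow> psd_kernel N (Z j)"
  shows "psd_kernel N (\<lambda>x y. \<Sum>j\<in>J. Z j x y)"
  unfolding psd_kernel_def
proof
  fix f
  have "sesq N (\<lambda>x y. \<Sum>j\<in>J. Z j x y) f f = (\<Sum>j\<in>J. sesq N (Z j) f f)"
    unfolding sesq_def by (simp add: sum_distrib_left sum_distrib_right sum.swap[of _ J])
  also have "0 \<le> \<dots>" using assms unfolding psd_kernel_def by (intro sum_nonneg) auto
  finally show "0 \<le> sesq N (\<lambda>x y. \<Sum>j\<in>J. Z j x y) f f" .
qed

lemma psd_kernel_rank_one: "psd_kernel N (\<lambda>x y. cnj (u x) * u y)"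
  unfolding psd_kernel_def
proof
  fix f
  define s where "s = (\<Sum>x<N. u x * f x)"
  have "sesq N (\<lambda>x y. cnj (u x) * u y) f f = s * cnj s"
    unfolding sesq_def s_def by (simp add: sum_distrib_left sum_distrib_right mult_ac)
  then show "0 \<le> sesq N (\<lambda>x y. cnj (u x) * u y) f f"
    using conjugate_square_positive[of s] by simp
qed

lemma mult_add_less_mult:
  fixes p t N M :: nat
  assumes "p < N" "t < M"
  shows "p * M + t < N * M"
proof -
  have "p * M + t < (p + 1) * M" using assms by simp
  also have "\<dots> \<le> N * M" using assms by (intro mult_right_mono) auto
  finally show ?thesis .
qed

lemma mult_add_div_mod:
  fixes a t M :: nat
  assumes "t < M"
  shows "(a * M + t) div M = a" "(a * M + t) mod M = t"
  using assms by simp_all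

locale cq_leak =
  fixes n d m k :: nat and l :: "complex mat \<Rightarrow> complex mat"
  assumes n_pos: "1 \<le> n" and d_pos: "1 \<le> d" and leak: "is_leak n d m k l"
begin

abbreviation "dA \<equiv> n * d"
abbreviation "dS \<equiv> m * k"
abbreviation "dAS \<equiv> n * d * (m * k)"
abbreviation "A \<equiv> cq_alg n d"

lemma leak_add: "x \<in> A \<Longrightarrow> y \<in> A \<Longrightarrow> l (x + y) = l x + l y"
  using leak unfolding is_leak_def process_def lin_on_def by blast

lemma leak_smult: "x \<in> A \<Longrightarrow> l (c \<cdot>\<^sub>m x) = c \<cdot>\<^sub>m l x"
  using leak unfolding is_leak_def process_def lin_on_def by blast

lemma leak_in_comp_alg: "x \<in> A \<Longrightarrow> l x \<in> cq_comp_alg n d m k"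
  using leak unfolding is_leak_def process_def by blast

lemma leak_carrier: "x \<in> A \<Longrightarrow> l x \<in> carrier_mat dAS dAS"
  using leak_in_comp_alg unfolding cq_comp_alg_def by blast

lemma psd_amplify_leak: "Y \<in> amp_alg r dA A \<Longrightarrow> psd Y \<Longrightarrow> psd (amplify r dA dAS l Y)"
  using leak unfolding is_leak_def process_def completely_positive_def by blast

lemma ptrace_leak: "x \<in> A \<Longrightarrow> ptrace_S n d m k (l x) = x"
  using leak unfolding is_leak_def by blast

lemma leak_zero: "l (0\<^sub>m dA dA) = 0\<^sub>m dAS dAS"
proof -
  have zero: "0\<^sub>m dA dA \<in> A" unfolding cq_alg_def by auto
  have "l (0\<^sub>m dA dA) = l ((0::complex) \<cdot>\<^sub>m 0\<^sub>m dA dA)" by simp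
  also have "\<dots> = 0 \<cdot>\<^sub>m l (0\<^sub>m dA dA)" by (rule leak_smult[OF zero])
  also have "\<dots> = 0\<^sub>m dAS dAS" using leak_carrier[OF zero] by (intro eq_matI) auto
  finally show ?thesis .
qed

definition matrix_unit :: "nat \<Rightarrow> nat \<Rightarrow> complex mat" where
  "matrix_unit p q = mat dA dA (\<lambda>(x,y). if x = p \<and> y = q then 1 else 0)"

lemma matrix_unit_dim [simp]: "dim_row (matrix_unit p q) = dA" "dim_col (matrix_unit p q) = dA"
  unfolding matrix_unit_def by simp_all

lemma matrix_unit_carrier [simp]: "matrix_unit p q \<in> carrier_mat dA dA"
  unfolding matrix_unit_def by simp

lemma matrix_unit_index:
  "i < dA \<Longrightarrow> j < dA \<Longrightarrow> matrix_unit p q $$ (i,j) = (if i = p \<and> j = q then 1 else 0)"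
  unfolding matrix_unit_def by simp

lemma matrix_unit_in_alg: "p < dA \<Longrightarrow> q < dA \<Longrightarrow> p div d = q div d \<Longrightarrow> matrix_unit p q \<in> A"
  unfolding matrix_unit_def cq_alg_def by auto

lemma ptrace_leak_matrix_unit:
  assumes "p < dA" "q < dA" "p div d = q div d" "r < dA" "s < dA"
  shows "(\<Sum>t<dS. l (matrix_unit p q) $$ (r*dS+t, s*dS+t)) = (if r = p \<and> s = q then 1 else 0)"
proof -
  have "ptrace_S n d m k (l (matrix_unit p q)) $$ (r,s) = matrix_unit p q $$ (r,s)"
    using ptrace_leak[OF matrix_unit_in_alg[OF assms(1-3)]] by simp
  then show ?thesis using assms unfolding ptrace_S_def matrix_unit_def by simp
qed

lemma dS_pos: "0 < dS"
proof (rule ccontr)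
  assume "\<not> 0 < dS"
  have "0 < dA" using n_pos d_pos by simp
  from ptrace_leak_matrix_unit[OF this this refl this this] \<open>\<not> 0 < dS\<close> show False
    by (cases "m = 0") auto
qed

lemma index_split:
  assumes "x < dAS"
  shows "x div dS < dA" "x mod dS < dS" "x = x div dS * dS + x mod dS"
  using assms dS_pos by (simp_all add: less_mult_imp_div_less) (metis div_mult_mod_eq)

lemma index_join: "p < dA \<Longrightarrow> t < dS \<Longrightarrow> p * dS + t < dAS"
  using mult_add_less_mult[of p dA t dS] by simp

text \<open>The rank-one projection onto \<open>e\<^sub>p \<oplus> e\<^sub>q\<close> in \<open>M\<^sub>2(A)\<close>: its image \<open>pair_image p q\<close> under \<open>id\<^sub>2 \<otimes> l\<close> is a
  positive matrix with blocks \<open>l (E\<^sub>p\<^sub>p)\<close>, \<open>l (E\<^sub>p\<^sub>q)\<close>, \<open>l (E\<^sub>q\<^sub>p)\<close>, \<open>l (E\<^sub>q\<^sub>q)\<close>.\<close>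

definition pair_proj :: "nat \<Rightarrow> nat \<Rightarrow> complex mat" where
  "pair_proj p q = mat (2*dA) (2*dA) (\<lambda>(x,y). if x \<in> {p, dA+q} \<and> y \<in> {p, dA+q} then 1 else 0)"

lemma blk_pair_proj:
  assumes "p < dA" "q < dA" "a < 2" "b < 2"
  shows "blk (pair_proj p q) dA a b = matrix_unit (if a = 0 then p else q) (if b = 0 then p else q)"
proof (rule eq_matI)
  fix i j assume "i < dim_row (matrix_unit (if a = 0 then p else q) (if b = 0 then p else q))"
    "j < dim_col (matrix_unit (if a = 0 then p else q) (if b = 0 then p else q))"
  then have ij: "i < dA" "j < dA" unfolding matrix_unit_def by auto
  have "a*dA+i < 2*dA" "b*dA+j < 2*dA" using ij mult_add_less_mult assms(3,4) by blast+
  moreover have "a = 0 \<or> a = 1" "b = 0 \<or> b = 1" using assms(3,4) by auto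
  ultimately show "blk (pair_proj p q) dA a b $$ (i,j)
      = matrix_unit (if a = 0 then p else q) (if b = 0 then p else q) $$ (i,j)"
    unfolding blk_def pair_proj_def matrix_unit_def using ij assms(1,2) by auto
qed (auto simp: blk_def matrix_unit_def)

lemma pair_proj_in_amp_alg:
  assumes "p < dA" "q < dA" "p div d = q div d"
  shows "pair_proj p q \<in> amp_alg 2 dA A"
  unfolding amp_alg_def
proof (intro CollectI conjI allI impI)
  show "pair_proj p q \<in> carrier_mat (2*dA) (2*dA)" unfolding pair_proj_def by simp
  fix a b :: nat assume "a < 2" "b < 2"
  then show "blk (pair_proj p q) dA a b \<in> A"
    using assms by (simp add: blk_pair_proj matrix_unit_in_alg)
qed

lemma psd_pair_proj: "psd (pair_proj p q)"
proof -
  let ?u = "\<lambda>x. if x \<in> {p, dA+q} then 1 else 0 :: complex"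
  have "psd_kernel (2*dA) (\<lambda>x y. cnj (?u x) * ?u y)" by (rule psd_kernel_rank_one)
  moreover have "psd_kernel (2*dA) (\<lambda>x y. cnj (?u x) * ?u y)
      \<longleftrightarrow> psd_kernel (2*dA) (\<lambda>x y. pair_proj p q $$ (x,y))"
    by (rule psd_kernel_cong) (simp add: pair_proj_def)
  ultimately show ?thesis
    by (subst psd_iff_psd_kernel[of _ "2*dA"]) (simp_all add: pair_proj_def)
qed

definition pair_image :: "nat \<Rightarrow> nat \<Rightarrow> complex mat" where
  "pair_image p q = amplify 2 dA dAS l (pair_proj p q)"

lemma psd_kernel_pair_image:
  assumes "p < dA" "q < dA" "p div d = q div d"
  shows "psd_kernel (2*dAS) (\<lambda>x y. pair_image p q $$ (x,y))"
  using psd_amplify_leak[OF pair_proj_in_amp_alg[OF assms] psd_pair_proj]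
  by (subst psd_iff_psd_kernel[symmetric]) (auto simp: pair_image_def amplify_def)

lemma pair_image_entries:
  assumes "p < dA" "q < dA" "x < dAS" "y < dAS"
  shows "pair_image p q $$ (x, y) = l (matrix_unit p p) $$ (x,y)"
    "pair_image p q $$ (x, dAS+y) = l (matrix_unit p q) $$ (x,y)"
    "pair_image p q $$ (dAS+x, y) = l (matrix_unit q p) $$ (x,y)"
    "pair_image p q $$ (dAS+x, dAS+y) = l (matrix_unit q q) $$ (x,y)"
proof -
  have lt: "x < 2*dAS" "y < 2*dAS" "dAS + x < 2*dAS" "dAS + y < 2*dAS"
    using assms(3,4) by linarith+
  have shift: "(c + z) div c = 1" "(c + z) mod c = z" if "z < c" for c z :: nat
    using that by (simp_all add: div_add_self1)
  have idx: "z div dAS = 0" "z mod dAS = z" "(dAS + z) div dAS = 1" "(dAS + z) mod dAS = z"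
    if "z < dAS" for z
    using that shift[OF that] by simp_all
  have blks: "blk (pair_proj p q) dA 0 0 = matrix_unit p p" "blk (pair_proj p q) dA 0 1 = matrix_unit p q"
    "blk (pair_proj p q) dA 1 0 = matrix_unit q p" "blk (pair_proj p q) dA 1 1 = matrix_unit q q"
    using blk_pair_proj[OF assms(1,2)] by simp_all
  note simps = idx[OF assms(3)] idx[OF assms(4)] blks
  show "pair_image p q $$ (x, y) = l (matrix_unit p p) $$ (x,y)"
    unfolding pair_image_def amplify_def index_mat(1)[OF lt(1,2)] by (simp only: simps split)
  show "pair_image p q $$ (x, dAS+y) = l (matrix_unit p q) $$ (x,y)"
    unfolding pair_image_def amplify_def index_mat(1)[OF lt(1,4)] by (simp only: simps split)
  show "pair_image p q $$ (dAS+x, y) = l (matrix_unit q p) $$ (x,y)"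
    unfolding pair_image_def amplify_def index_mat(1)[OF lt(3,2)] by (simp only: simps split)
  show "pair_image p q $$ (dAS+x, dAS+y) = l (matrix_unit q q) $$ (x,y)"
    unfolding pair_image_def amplify_def index_mat(1)[OF lt(3,4)] by (simp only: simps split)
qed

lemma leak_unit_diag_nonneg:
  assumes "p < dA" "x < dAS"
  shows "0 \<le> l (matrix_unit p p) $$ (x,x)"
proof -
  have "x < 2*dAS" using assms(2) by linarith
  from psd_kernel_diag_nonneg[OF psd_kernel_pair_image[OF assms(1) assms(1) refl] this]
  show ?thesis using pair_image_entries(1)[OF assms(1) assms(1) assms(2) assms(2)] by simp
qed

text \<open>The partial trace fixes the trace of every diagonal block of \<open>l (E\<^sub>p\<^sub>p)\<close>; positivity then
  forces all diagonal entries outside block \<open>p\<close> to vanish.\<close>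

lemma leak_unit_diag_outside_block:
  assumes p: "p < dA" and x: "x < dAS" and outside: "x div dS \<noteq> p"
  shows "l (matrix_unit p p) $$ (x,x) = 0"
proof -
  define r where "r = x div dS"
  have r: "r < dA" and xr: "x = r*dS + x mod dS" and t: "x mod dS < dS"
    using index_split[OF x] unfolding r_def by simp_all
  have "(\<Sum>t<dS. l (matrix_unit p p) $$ (r*dS+t, r*dS+t)) = 0"
    using ptrace_leak_matrix_unit[OF p p refl r r] outside unfolding r_def by simp
  moreover have "\<forall>t\<in>{..<dS}. 0 \<le> l (matrix_unit p p) $$ (r*dS+t, r*dS+t)"
    using leak_unit_diag_nonneg[OF p] index_join[OF r] by simp
  ultimately have "l (matrix_unit p p) $$ (r*dS + x mod dS, r*dS + x mod dS) = 0"
    using sum_nonneg_0[of "{..<dS}" "\<lambda>t. l (matrix_unit p p) $$ (r*dS+t, r*dS+t)"] t by simp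
  then show ?thesis using xr by metis
qed

lemma leak_unit_support:
  assumes pq: "p < dA" "q < dA" "p div d = q div d" and xy: "x < dAS" "y < dAS"
    and outside: "x div dS \<noteq> p \<or> y div dS \<noteq> q"
  shows "l (matrix_unit p q) $$ (x,y) = 0"
proof -
  note psd = psd_kernel_pair_image[OF pq]
  have lt: "x < 2*dAS" "dAS + y < 2*dAS" using xy by linarith+
  have entry: "pair_image p q $$ (x, dAS+y) = l (matrix_unit p q) $$ (x,y)"
    by (rule pair_image_entries(2)[OF pq(1,2) xy])
  from outside show ?thesis
  proof
    assume "x div dS \<noteq> p"
    then have "pair_image p q $$ (x,x) = 0"
      using leak_unit_diag_outside_block[OF pq(1) xy(1)] pair_image_entries(1)[OF pq(1,2) xy(1) xy(1)] by simp
    from psd_kernel_zero_diag(1)[OF psd lt this] show ?thesis using entry by simp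
  next
    assume "y div dS \<noteq> q"
    then have "pair_image p q $$ (dAS+y, dAS+y) = 0"
      using leak_unit_diag_outside_block[OF pq(2) xy(2)] pair_image_entries(4)[OF pq(1,2) xy(2) xy(2)] by simp
    from psd_kernel_zero_diag(2)[OF psd lt(2) lt(1) this] show ?thesis using entry by simp
  qed
qed

text \<open>Each summand below is the quadratic form of the positive matrix \<open>pair_image p q\<close> on a difference of
  two basis vectors, and by the partial-trace condition the summands add up to \<open>1 - 1 - 1 + 1\<close>.\<close>

lemma leak_unit_null_difference:
  assumes pq: "p < dA" "q < dA" "p div d = q div d" and t: "t < dS"
  shows "l (matrix_unit p p) $$ (p*dS+t, p*dS+t) - l (matrix_unit p q) $$ (p*dS+t, q*dS+t)
       - l (matrix_unit q p) $$ (q*dS+t, p*dS+t) + l (matrix_unit q q) $$ (q*dS+t, q*dS+t) = 0"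
proof -
  define G where "G u = l (matrix_unit p p) $$ (p*dS+u, p*dS+u) - l (matrix_unit p q) $$ (p*dS+u, q*dS+u)
       - l (matrix_unit q p) $$ (q*dS+u, p*dS+u) + l (matrix_unit q q) $$ (q*dS+u, q*dS+u)" for u
  have nonneg: "0 \<le> G u" if u: "u < dS" for u
  proof -
    have ia: "p*dS+u < dAS" "q*dS+u < dAS" using index_join pq u by auto
    have ib: "p*dS+u < 2*dAS" "dAS+(q*dS+u) < 2*dAS" using ia by linarith+
    let ?e = "\<lambda>x. delta (p*dS+u) x - delta (dAS+(q*dS+u)) x"
    have "0 \<le> sesq (2*dAS) (\<lambda>x y. pair_image p q $$ (x,y)) ?e ?e"
      using psd_kernel_pair_image[OF pq] unfolding psd_kernel_def by blast
    also have "sesq (2*dAS) (\<lambda>x y. pair_image p q $$ (x,y)) ?e ?e = G u"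
      unfolding sesq_delta_diff[OF ib] G_def
      by (simp only: pair_image_entries(1)[OF pq(1,2) ia(1) ia(1)] pair_image_entries(2)[OF pq(1,2) ia(1) ia(2)]
          pair_image_entries(3)[OF pq(1,2) ia(2) ia(1)] pair_image_entries(4)[OF pq(1,2) ia(2) ia(2)])
    finally show ?thesis .
  qed
  have "(\<Sum>u<dS. G u) = 0"
    using ptrace_leak_matrix_unit[OF pq(1) pq(1) refl pq(1) pq(1)] ptrace_leak_matrix_unit[OF pq pq(1) pq(2)]
      ptrace_leak_matrix_unit[OF pq(2) pq(1) pq(3)[symmetric] pq(2) pq(1)]
      ptrace_leak_matrix_unit[OF pq(2) pq(2) refl pq(2) pq(2)]
    unfolding G_def by (simp add: sum.distrib sum_subtractf)
  then have "G t = 0" using sum_nonneg_0[of "{..<dS}" G] nonneg t by simp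
  then show ?thesis unfolding G_def .
qed

lemma leak_unit_entry_eq:
  assumes pq: "p < dA" "q < dA" "p div d = q div d" and st: "s < dS" "t < dS"
  shows "l (matrix_unit p q) $$ (p*dS+s, q*dS+t) = l (matrix_unit p p) $$ (p*dS+s, p*dS+t)"
    "l (matrix_unit p q) $$ (p*dS+s, q*dS+t) = l (matrix_unit q q) $$ (q*dS+s, q*dS+t)"
proof -
  note psd = psd_kernel_pair_image[OF pq]
  have ia: "p*dS+s < dAS" "q*dS+s < dAS" "p*dS+t < dAS" "q*dS+t < dAS"
    using index_join pq st by auto
  have ib: "p*dS+s < 2*dAS" "p*dS+t < 2*dAS" "dAS+(q*dS+s) < 2*dAS" "dAS+(q*dS+t) < 2*dAS"
    using ia by linarith+
  have null: "pair_image p q $$ (p*dS+u, p*dS+u) - pair_image p q $$ (p*dS+u, dAS+(q*dS+u))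
      - pair_image p q $$ (dAS+(q*dS+u), p*dS+u) + pair_image p q $$ (dAS+(q*dS+u), dAS+(q*dS+u)) = 0"
    if u: "u < dS" for u
  proof -
    have "p*dS+u < dAS" "q*dS+u < dAS" using index_join pq u by auto
    with leak_unit_null_difference[OF pq u] show ?thesis
      by (simp only: pair_image_entries[OF pq(1,2)])
  qed
  have "pair_image p q $$ (p*dS+s, p*dS+t) = pair_image p q $$ (p*dS+s, dAS+(q*dS+t))"
    by (rule psd_kernel_eq_if_null_difference(2)[OF psd ib(2) ib(4) ib(1) null[OF st(2)]])
  then show "l (matrix_unit p q) $$ (p*dS+s, q*dS+t) = l (matrix_unit p p) $$ (p*dS+s, p*dS+t)"
    by (simp only: pair_image_entries(1)[OF pq(1,2) ia(1) ia(3)] pair_image_entries(2)[OF pq(1,2) ia(1) ia(4)])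
  have "pair_image p q $$ (p*dS+s, dAS+(q*dS+t)) = pair_image p q $$ (dAS+(q*dS+s), dAS+(q*dS+t))"
    by (rule psd_kernel_eq_if_null_difference(1)[OF psd ib(1) ib(3) ib(4) null[OF st(1)]])
  then show "l (matrix_unit p q) $$ (p*dS+s, q*dS+t) = l (matrix_unit q q) $$ (q*dS+s, q*dS+t)"
    by (simp only: pair_image_entries(2)[OF pq(1,2) ia(1) ia(4)] pair_image_entries(4)[OF pq(1,2) ia(2) ia(4)])
qed

definition leak_state :: "nat \<Rightarrow> complex mat" where
  "leak_state i = mat dS dS (\<lambda>(s,t). l (matrix_unit (i*d) (i*d)) $$ (i*d*dS+s, i*d*dS+t))"

lemma leak_state_dim [simp]: "dim_row (leak_state i) = dS" "dim_col (leak_state i) = dS"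
  unfolding leak_state_def by simp_all

text \<open>Chaining \<open>E\<^sub>p\<^sub>q \<leadsto> E\<^sub>p\<^sub>p \<leadsto> E\<^sub>p\<^sub>c \<leadsto> E\<^sub>c\<^sub>c\<close> through the first index \<open>c\<close> of the classical block
  shows that the leaked state depends only on the classical index.\<close>

lemma leak_matrix_unit_entry:
  assumes pq: "p < dA" "q < dA" "p div d = q div d" and xy: "x < dAS" "y < dAS"
  shows "l (matrix_unit p q) $$ (x,y) =
    (if x div dS = p \<and> y div dS = q then leak_state (p div d) $$ (x mod dS, y mod dS) else 0)"
proof (cases "x div dS = p \<and> y div dS = q")
  case True
  define s t where "s = x mod dS" and "t = y mod dS"
  have st: "s < dS" "t < dS" using index_split(2) xy unfolding s_def t_def by auto
  have xy': "x = p*dS+s" "y = q*dS+t" using True index_split(3) xy unfolding s_def t_def by metis+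
  define c where "c = p div d * d"
  have "c \<le> p" unfolding c_def by simp
  with pq(1) have "c < dA" by linarith
  moreover have "p div d = c div d" using d_pos unfolding c_def by simp
  ultimately have c: "c < dA" "p div d = c div d" .
  have "l (matrix_unit p q) $$ (x,y) = l (matrix_unit p p) $$ (p*dS+s, p*dS+t)"
    using leak_unit_entry_eq(1)[OF pq st] xy' by simp
  also have "\<dots> = l (matrix_unit p c) $$ (p*dS+s, c*dS+t)"
    using leak_unit_entry_eq(1)[OF pq(1) c st] by simp
  also have "\<dots> = l (matrix_unit c c) $$ (c*dS+s, c*dS+t)"
    using leak_unit_entry_eq(2)[OF pq(1) c st] by simp
  also have "\<dots> = leak_state (p div d) $$ (s,t)"
    unfolding leak_state_def c_def using st by simp
  finally show ?thesis using True s_def t_def by simp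
qed (use leak_unit_support[OF assms] in auto)

definition leak_model :: "complex mat \<Rightarrow> complex mat" where
  "leak_model X = mat dAS dAS (\<lambda>(x,y).
     X $$ (x div dS, y div dS) * leak_state (x div dS div d) $$ (x mod dS, y mod dS))"

lemma leak_model_dim [simp]: "dim_row (leak_model X) = dAS" "dim_col (leak_model X) = dAS"
  unfolding leak_model_def by simp_all

lemma leak_model_add:
  "X \<in> carrier_mat dA dA \<Longrightarrow> Y \<in> carrier_mat dA dA \<Longrightarrow> leak_model (X + Y) = leak_model X + leak_model Y"
  by (rule eq_matI) (auto simp: leak_model_def distrib_right index_split(1))

lemma leak_model_smult: "X \<in> carrier_mat dA dA \<Longrightarrow> leak_model (c \<cdot>\<^sub>m X) = c \<cdot>\<^sub>m leak_model X"
  by (rule eq_matI) (auto simp: leak_model_def index_split(1))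

lemma leak_model_zero: "leak_model (0\<^sub>m dA dA) = 0\<^sub>m dAS dAS"
  by (rule eq_matI) (auto simp: leak_model_def index_split(1))

lemma leak_model_matrix_unit:
  assumes "p < dA" "q < dA" "p div d = q div d"
  shows "leak_model (matrix_unit p q) = l (matrix_unit p q)"
proof (rule eq_matI)
  fix x y assume "x < dim_row (l (matrix_unit p q))" "y < dim_col (l (matrix_unit p q))"
  then have xy: "x < dAS" "y < dAS" using leak_carrier[OF matrix_unit_in_alg[OF assms]] by auto
  show "leak_model (matrix_unit p q) $$ (x,y) = l (matrix_unit p q) $$ (x,y)"
    using xy index_split(1)[OF xy(1)] index_split(1)[OF xy(2)]
    by (auto simp: leak_model_def matrix_unit_index leak_matrix_unit_entry[OF assms])
qed (use leak_carrier[OF matrix_unit_in_alg[OF assms]] in auto)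

lemma leak_eq_leak_model_on_support:
  assumes "finite S" "X \<in> A" "\<forall>p<dA. \<forall>q<dA. (p,q) \<notin> S \<longrightarrow> X $$ (p,q) = 0"
  shows "l X = leak_model X"
  using assms
proof (induction S arbitrary: X rule: finite_induct)
  case empty
  then have "X = 0\<^sub>m dA dA" unfolding cq_alg_def by (intro eq_matI) auto
  then show ?case by (simp add: leak_zero leak_model_zero)
next
  case (insert pq S)
  obtain p q where pq: "pq = (p,q)" by force
  have X: "X \<in> carrier_mat dA dA" using insert(4) unfolding cq_alg_def by auto
  define X' where "X' = mat dA dA (\<lambda>(i,j). if (i,j) = (p,q) then 0 else X $$ (i,j))"
  have X': "X' \<in> A" using insert(4) unfolding X'_def cq_alg_def by auto
  have IH: "l X' = leak_model X'" using insert(3)[OF X'] insert(5) pq unfolding X'_def by auto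
  show ?case
  proof (cases "p < dA \<and> q < dA \<and> p div d = q div d")
    case True
    then have E: "matrix_unit p q \<in> A" by (intro matrix_unit_in_alg) auto
    have split: "X = X' + X $$ (p,q) \<cdot>\<^sub>m matrix_unit p q"
      using X True unfolding X'_def matrix_unit_def by (intro eq_matI) auto
    have cE: "X $$ (p,q) \<cdot>\<^sub>m matrix_unit p q \<in> A"
      using True unfolding cq_alg_def matrix_unit_def by auto
    have "l X = l X' + X $$ (p,q) \<cdot>\<^sub>m l (matrix_unit p q)"
      by (subst split) (simp add: leak_add[OF X' cE] leak_smult[OF E])
    also have "\<dots> = leak_model X' + X $$ (p,q) \<cdot>\<^sub>m leak_model (matrix_unit p q)"
      using IH True by (simp add: leak_model_matrix_unit)
    also have "\<dots> = leak_model X"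
      by (subst (2) split) (simp add: leak_model_add leak_model_smult X'_def)
    finally show ?thesis .
  next
    case False
    then have "X' = X" using X insert(4) unfolding X'_def cq_alg_def by (intro eq_matI) auto
    then show ?thesis using IH by simp
  qed
qed

lemma leak_eq_leak_model: "X \<in> A \<Longrightarrow> l X = leak_model X"
  by (rule leak_eq_leak_model_on_support[of "{..<dA} \<times> {..<dA}"]) auto

definition leak_channel :: "complex mat \<Rightarrow> complex mat" where
  "leak_channel X = mat dS dS (\<lambda>(s,t). \<Sum>j<n. X $$ (j,j) * leak_state j $$ (s,t))"

lemma lin_on_leak_channel: "lin_on (cq_alg n 1) leak_channel"
  unfolding lin_on_def
proof (intro conjI ballI allI)
  fix x y assume "x \<in> cq_alg n 1" "y \<in> cq_alg n 1"
  then have "x \<in> carrier_mat n n" "y \<in> carrier_mat n n" unfolding cq_alg_def by auto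
  then show "leak_channel (x + y) = leak_channel x + leak_channel y" unfolding leak_channel_def
    by (intro eq_matI) (auto simp: sum.distrib distrib_right intro!: sum.cong)
next
  fix c :: complex and x assume "x \<in> cq_alg n 1"
  then have "x \<in> carrier_mat n n" unfolding cq_alg_def by auto
  then show "leak_channel (c \<cdot>\<^sub>m x) = c \<cdot>\<^sub>m leak_channel x" unfolding leak_channel_def
    by (intro eq_matI) (auto simp: sum_distrib_left mult.assoc intro!: sum.cong)
qed

lemma leak_state_block_diagonal:
  assumes j: "j < n" and st: "s < dS" "t < dS" "s div k \<noteq> t div k"
  shows "leak_state j $$ (s,t) = 0"
proof -
  define c where "c = j*d"
  have c: "c < dA" using j d_pos unfolding c_def by simp
  have E: "matrix_unit c c \<in> A" using c by (intro matrix_unit_in_alg) auto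
  have classical_index: "((c*dS+z) div k) mod m = z div k" if "z < dS" for z
  proof -
    have "k \<noteq> 0" using dS_pos by simp
    have eq: "c*dS+z = z + c*m*k" by (simp add: mult_ac)
    have "(c*dS+z) div k = c*m + z div k" unfolding eq using \<open>k \<noteq> 0\<close> by simp
    moreover have "z div k < m" using that by (simp add: less_mult_imp_div_less)
    ultimately show ?thesis by simp
  qed
  have "l (matrix_unit c c) $$ (c*dS+s, c*dS+t) = 0"
    using leak_in_comp_alg[OF E] index_join[OF c] st classical_index[of s] classical_index[of t]
    unfolding cq_comp_alg_def by auto
  then show ?thesis unfolding leak_state_def c_def using st by simp
qed

lemma trace_leak_state: "j < n \<Longrightarrow> (\<Sum>s<dS. leak_state j $$ (s,s)) = 1"
  using ptrace_leak_matrix_unit[of "j*d" "j*d" "j*d" "j*d"] d_pos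
  by (simp add: leak_state_def)

lemma leak_channel_in_alg: "x \<in> cq_alg n 1 \<Longrightarrow> leak_channel x \<in> cq_alg m k"
  unfolding cq_alg_def[of m k] leak_channel_def using leak_state_block_diagonal by auto

lemma causal_leak_channel: "causal (cq_alg n 1) leak_channel"
  unfolding causal_def
proof
  fix x assume "x \<in> cq_alg n 1"
  then have x: "x \<in> carrier_mat n n" unfolding cq_alg_def by auto
  have "mtrace (leak_channel x) = (\<Sum>s<dS. \<Sum>j<n. x $$ (j,j) * leak_state j $$ (s,s))"
    unfolding mtrace_def leak_channel_def by simp
  also have "\<dots> = (\<Sum>j<n. x $$ (j,j) * (\<Sum>s<dS. leak_state j $$ (s,s)))"
    by (simp add: sum.swap[of _ "{..<dS}"] sum_distrib_left)
  also have "\<dots> = mtrace x" unfolding mtrace_def using x trace_leak_state by simp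
  finally show "mtrace (leak_channel x) = mtrace x" .
qed

lemma leak_channel_ketbra: "i < n \<Longrightarrow> leak_channel (ketbra n i) = leak_state i"
  by (rule eq_matI) (simp_all add: leak_channel_def ketbra_def if_distrib[of "\<lambda>z. z * _"] sum.delta cong: if_cong)

lemma leak_ketbra_kron:
  assumes i: "i < n" and \<rho>: "\<rho> \<in> carrier_mat d d"
  shows "l (kron (ketbra n i) \<rho>) = kron (kron (ketbra n i) \<rho>) (leak_channel (ketbra n i))"
proof -
  have classical: "p div d < n" if "p < dA" for p using that by (simp add: less_mult_imp_div_less)
  have "kron (ketbra n i) \<rho> \<in> A" using \<rho> classical unfolding cq_alg_def kron_def ketbra_def by auto
  then have "l (kron (ketbra n i) \<rho>) = leak_model (kron (ketbra n i) \<rho>)" by (rule leak_eq_leak_model)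
  also have "\<dots> = kron (kron (ketbra n i) \<rho>) (leak_state i)"
  proof (rule eq_matI)
    fix x y assume "x < dim_row (kron (kron (ketbra n i) \<rho>) (leak_state i))"
      "y < dim_col (kron (kron (ketbra n i) \<rho>) (leak_state i))"
    then have xy: "x < dAS" "y < dAS" using \<rho> unfolding kron_def ketbra_def by auto
    note a = index_split(1)[OF xy(1)] index_split(1)[OF xy(2)]
    show "leak_model (kron (ketbra n i) \<rho>) $$ (x,y) = kron (kron (ketbra n i) \<rho>) (leak_state i) $$ (x,y)"
      using xy a \<rho> classical[OF a(1)] classical[OF a(2)] unfolding leak_model_def
      by (simp add: kron_def ketbra_def)
  qed (use \<rho> in \<open>auto simp: kron_def ketbra_def\<close>)
  finally show ?thesis using leak_channel_ketbra[OF i] by simp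
qed

definition tensor_unit :: "nat \<Rightarrow> (nat \<Rightarrow> nat \<Rightarrow> complex) \<Rightarrow> nat \<Rightarrow> complex mat" where
  "tensor_unit r C j = mat (r*dA) (r*dA) (\<lambda>(u,v).
     if u mod dA = j*d \<and> v mod dA = j*d then C (u div dA) (v div dA) else 0)"

lemma blk_tensor_unit:
  assumes "a < r" "b < r"
  shows "blk (tensor_unit r C j) dA a b = C a b \<cdot>\<^sub>m matrix_unit (j*d) (j*d)"
proof (rule eq_matI)
  fix p q assume "p < dim_row (C a b \<cdot>\<^sub>m matrix_unit (j*d) (j*d))"
    "q < dim_col (C a b \<cdot>\<^sub>m matrix_unit (j*d) (j*d))"
  then have pq: "p < dA" "q < dA" by auto
  have "a*dA+p < r*dA" "b*dA+q < r*dA" using assms pq by (simp_all add: mult_add_less_mult)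
  then show "blk (tensor_unit r C j) dA a b $$ (p,q) = (C a b \<cdot>\<^sub>m matrix_unit (j*d) (j*d)) $$ (p,q)"
    unfolding blk_def tensor_unit_def index_mat(1)[OF pq] index_mat(1)[OF \<open>a*dA+p < r*dA\<close> \<open>b*dA+q < r*dA\<close>]
      prod.case mult_add_div_mod[OF pq(1)] mult_add_div_mod[OF pq(2)]
    using pq by (simp add: matrix_unit_index)
qed (simp_all add: blk_def)

lemma tensor_unit_in_amp_alg: "j < n \<Longrightarrow> tensor_unit r C j \<in> amp_alg r dA A"
  unfolding amp_alg_def
proof (intro CollectI conjI allI impI)
  show "tensor_unit r C j \<in> carrier_mat (r*dA) (r*dA)" unfolding tensor_unit_def by simp
  fix a b assume "j < n" "a < r" "b < r"
  then show "blk (tensor_unit r C j) dA a b \<in> A"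
    unfolding blk_tensor_unit[OF \<open>a < r\<close> \<open>b < r\<close>] cq_alg_def by (auto simp: matrix_unit_index)
qed

lemma psd_tensor_unit:
  assumes C: "psd_kernel r C" and j: "j < n"
  shows "psd (tensor_unit r C j)"
proof -
  have jd: "j*d < dA" using j d_pos by simp
  let ?h = "\<lambda>a. a*dA + j*d"
  have "psd_kernel (r*dA) (\<lambda>u v. tensor_unit r C j $$ (u,v))"
  proof (rule psd_kernel_extend[OF C])
    show "inj_on ?h {..<r}" using n_pos d_pos by (auto simp: inj_on_def)
    show "?h ` {..<r} \<subseteq> {..<r*dA}" using jd by (auto simp: mult_add_less_mult)
    fix x y assume "x < r" "y < r"
    then show "C x y = tensor_unit r C j $$ (?h x, ?h y)"
      unfolding tensor_unit_def using jd by (simp add: mult_add_less_mult)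
  next
    fix x y assume xy: "x < r*dA" "y < r*dA" and "x \<notin> ?h ` {..<r} \<or> y \<notin> ?h ` {..<r}"
    moreover have "z \<in> ?h ` {..<r}" if "z < r*dA" "z mod dA = j*d" for z
    proof
      show "z = z div dA * dA + j*d" using that(2) by (metis div_mult_mod_eq)
      show "z div dA \<in> {..<r}" using that(1) by (simp add: less_mult_imp_div_less)
    qed
    ultimately show "tensor_unit r C j $$ (x,y) = 0" unfolding tensor_unit_def by auto
  qed
  then show ?thesis by (simp add: psd_iff_psd_kernel[of _ "r*dA"] tensor_unit_def)
qed

text \<open>\<open>C \<otimes> \<sigma>\<^sub>j\<close> is the compression of \<open>(id \<otimes> l) (C \<otimes> E\<^sub>j\<^sub>d\<^sub>,\<^sub>j\<^sub>d)\<close> to the indices of block \<open>j*d\<close>.\<close>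

lemma psd_kernel_tensor_leak_state:
  assumes C: "psd_kernel r C" and j: "j < n"
  shows "psd_kernel (r*dS) (\<lambda>x y. C (x div dS) (y div dS) * leak_state j $$ (x mod dS, y mod dS))"
proof -
  have jd: "j*d < dA" using j d_pos by simp
  have E: "matrix_unit (j*d) (j*d) \<in> A" using jd by (intro matrix_unit_in_alg) auto
  have "psd (amplify r dA dAS l (tensor_unit r C j))"
    by (rule psd_amplify_leak[OF tensor_unit_in_amp_alg[OF j] psd_tensor_unit[OF C j]])
  then have psd: "psd_kernel (r*dAS) (\<lambda>u v. amplify r dA dAS l (tensor_unit r C j) $$ (u,v))"
    by (subst psd_iff_psd_kernel[symmetric]) (auto simp: amplify_def)
  define h where "h x = (x div dS)*dAS + (j*d*dS + x mod dS)" for x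
  have inner: "j*d*dS + x mod dS < dAS" for x using index_join[OF jd] dS_pos by simp
  have h: "h x < r*dAS" "h x div dAS = x div dS" "h x mod dAS = j*d*dS + x mod dS" if "x < r*dS" for x
  proof -
    have "x div dS < r" using that by (simp add: less_mult_imp_div_less)
    then show "h x < r*dAS" unfolding h_def using inner by (rule mult_add_less_mult)
    from mult_add_div_mod[OF inner] show "h x div dAS = x div dS" "h x mod dAS = j*d*dS + x mod dS"
      unfolding h_def by simp_all
  qed
  show ?thesis
  proof (rule psd_kernel_compress[OF psd, of h])
    show "inj_on h {..<r*dS}"
    proof (rule inj_onI)
      fix x y assume "x \<in> {..<r*dS}" "y \<in> {..<r*dS}" "h x = h y"
      then have "x div dS = y div dS" "x mod dS = y mod dS" using h(2,3) by (metis lessThan_iff add_left_cancel)+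
      then show "x = y" by (metis div_mult_mod_eq)
    qed
    show "h ` {..<r*dS} \<subseteq> {..<r*dAS}" using h(1) by auto
    fix x y assume xy: "x < r*dS" "y < r*dS"
    have a: "x div dS < r" "y div dS < r" using xy by (simp_all add: less_mult_imp_div_less)
    have "amplify r dA dAS l (tensor_unit r C j) $$ (h x, h y)
        = l (C (x div dS) (y div dS) \<cdot>\<^sub>m matrix_unit (j*d) (j*d)) $$ (j*d*dS + x mod dS, j*d*dS + y mod dS)"
      unfolding amplify_def using h[OF xy(1)] h[OF xy(2)] by (simp add: blk_tensor_unit[OF a])
    also have "\<dots> = C (x div dS) (y div dS) * leak_state j $$ (x mod dS, y mod dS)"
      unfolding leak_smult[OF E] leak_state_def using leak_carrier[OF E] inner dS_pos by simp
    finally show "C (x div dS) (y div dS) * leak_state j $$ (x mod dS, y mod dS)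
        = amplify r dA dAS l (tensor_unit r C j) $$ (h x, h y)" by simp
  qed
qed

lemma completely_positive_leak_channel: "completely_positive (cq_alg n 1) n dS leak_channel"
  unfolding completely_positive_def
proof (intro allI impI, elim conjE)
  fix r Y assume Y: "Y \<in> amp_alg r n (cq_alg n 1)" and "psd Y"
  then have "psd_kernel (r*n) (\<lambda>x y. Y $$ (x,y))"
    using psd_iff_psd_kernel unfolding amp_alg_def by blast
  then have minor: "psd_kernel r (\<lambda>a b. Y $$ (a*n+j, b*n+j))" if "j < n" for j
    by (rule psd_kernel_compress[of _ _ "\<lambda>a. a*n+j"]) (use that in \<open>auto simp: inj_on_def mult_add_less_mult\<close>)
  have "psd_kernel (r*dS) (\<lambda>x y. \<Sum>j<n. Y $$ ((x div dS)*n+j, (y div dS)*n+j) * leak_state j $$ (x mod dS, y mod dS))"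
    by (rule psd_kernel_sum) (simp add: psd_kernel_tensor_leak_state[OF minor])
  moreover have "amplify r n dS leak_channel Y $$ (x,y)
      = (\<Sum>j<n. Y $$ ((x div dS)*n+j, (y div dS)*n+j) * leak_state j $$ (x mod dS, y mod dS))"
    if "x < r*dS" "y < r*dS" for x y
    using that dS_pos unfolding amplify_def leak_channel_def blk_def by simp
  ultimately show "psd (amplify r n dS leak_channel Y)"
    by (subst psd_iff_psd_kernel[of _ "r*dS"]) (auto simp: amplify_def cong: psd_kernel_cong)
qed

end

theorem proposition5:
  fixes n d m k :: nat and l :: "complex mat \<Rightarrow> complex mat"
  assumes "n \<ge> 1" and "d \<ge> 1"
    and "is_leak n d m k l"
  shows "\<exists>\<Lambda>. process (cq_alg n 1) n (cq_alg m k) (m*k) \<Lambda> \<and> causal (cq_alg n 1) \<Lambda> \<and>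
           (\<forall>i<n. \<forall>\<rho>\<in>carrier_mat d d.
              l (kron (ketbra n i) \<rho>) = kron (kron (ketbra n i) \<rho>) (\<Lambda> (ketbra n i)))"
proof -
  interpret cq_leak n d m k l using assms by unfold_locales
  have "process (cq_alg n 1) n (cq_alg m k) (m*k) leak_channel"
    unfolding process_def
    using lin_on_leak_channel leak_channel_in_alg completely_positive_leak_channel by blast
  then show ?thesis using causal_leak_channel leak_ketbra_kron by blast
qed

end
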